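(* Fix $t_0>-(\mu-1)$. Then there exists $C=C(t_0)>0$ such that for all $t\geq t_0$ and all $N\in\mathbb N$, $\frac1{Z_N(t)}\int_{\mathbb R^{N-1}}\frac1NP_4(y)e^{-\frac{tP_2(y)+Q(y)}{2N}}dy\leq C$.
   Context: Fix $\mu>1$. For $N\in\mathbb N$ let $K_N$ be the periodic discrete Laplacian $(K_Nx)_k=\frac{\mu}{4\sin^2(\pi/N)}(2x_k-x_{k+1}-x_{k-1})$ (indices mod $N$). Let $A$ be an $N\times(N-1)$ matrix whose columns form an orthonormal basis of $\{x\in\mathbb R^N:\sum_kx_k=0\}$. For $y\in\mathbb R^{N-1}$ let $P_m(y)=\sum_{k=1}^N(Ay)_k^m$ ($m=2,4$) and $Q(y)=\langle Ay,K_NAy\rangle-P_2(y)$. For $t>-(\mu-1)$ let $Z_N(t)=\int_{\mathbb R^{N-1}}e^{-\frac{tP_2(y)+Q(y)}{2N}}dy$. *)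

theory Defs
  imports "HOL-Analysis.Analysis"
begin

text \<open>Vectors in R^N are functions nat => real, with indices 0..N-1 meaningful.
  The matrix A is an N x (N-1) matrix given as a function A k j (row k < N, column j < N-1).\<close>

definition is_onb_sum_zero :: "nat \<Rightarrow> (nat \<Rightarrow> nat \<Rightarrow> real) \<Rightarrow> bool" where
  "is_onb_sum_zero N A \<longleftrightarrow>
     (\<forall>i<N-1. \<forall>j<N-1. (\<Sum>k<N. A k i * A k j) = (if i = j then 1 else 0)) \<and>
     (\<forall>j<N-1. (\<Sum>k<N. A k j) = 0) \<and>
     (\<forall>x::nat \<Rightarrow> real. (\<Sum>k<N. x k) = 0 \<longrightarrow>
        (\<exists>y::nat \<Rightarrow> real. \<forall>k<N. x k = (\<Sum>j<N-1. A k j * y j)))"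

definition Amul :: "nat \<Rightarrow> (nat \<Rightarrow> nat \<Rightarrow> real) \<Rightarrow> (nat \<Rightarrow> real) \<Rightarrow> nat \<Rightarrow> real" where
  "Amul N A y k = (\<Sum>j<N-1. A k j * y j)"

definition KN :: "real \<Rightarrow> nat \<Rightarrow> (nat \<Rightarrow> real) \<Rightarrow> nat \<Rightarrow> real" where
  "KN \<mu> N x k = \<mu> / (4 * (sin (pi / real N))^2) *
      (2 * x k - x ((k + 1) mod N) - x ((k + N - 1) mod N))"

definition Pm :: "nat \<Rightarrow> nat \<Rightarrow> (nat \<Rightarrow> nat \<Rightarrow> real) \<Rightarrow> (nat \<Rightarrow> real) \<Rightarrow> real" where
  "Pm m N A y = (\<Sum>k<N. (Amul N A y k) ^ m)"

definition Qf :: "real \<Rightarrow> nat \<Rightarrow> (nat \<Rightarrow> nat \<Rightarrow> real) \<Rightarrow> (nat \<Rightarrow> real) \<Rightarrow> real" where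
  "Qf \<mu> N A y = (\<Sum>k<N. Amul N A y k * KN \<mu> N (Amul N A y) k) - Pm 2 N A y"

definition RN :: "nat \<Rightarrow> (nat \<Rightarrow> real) measure" where
  "RN n = PiM {..<n} (\<lambda>_. lborel)"

definition weight :: "real \<Rightarrow> nat \<Rightarrow> (nat \<Rightarrow> nat \<Rightarrow> real) \<Rightarrow> real \<Rightarrow> (nat \<Rightarrow> real) \<Rightarrow> real" where
  "weight \<mu> N A t y = exp (- (t * Pm 2 N A y + Qf \<mu> N A y) / (2 * real N))"

definition ZN :: "real \<Rightarrow> nat \<Rightarrow> (nat \<Rightarrow> nat \<Rightarrow> real) \<Rightarrow> real \<Rightarrow> real" where
  "ZN \<mu> N A t = (\<integral>y. weight \<mu> N A t y \<partial>RN (N - 1))"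

end

theory Submission
  imports Defs "HOL-Probability.Distributions" "Jordan_Normal_Form.Determinant"
begin

text \<open>On sum-zero vectors \<open>x = A y\<close> the exponent \<open>(t P\<^sub>2 + Q)/(2N)\<close> equals
  \<open>\<langle>x, (K\<^sub>N + t - 1) x\<rangle>/(2N)\<close>. The sharp discrete Wirtinger inequality
  \<open>\<langle>x, K\<^sub>N x\<rangle> \<ge> \<mu> |x|\<^sup>2\<close>, i.e. the spectral gap of the cyclic Laplacian,
  makes this form coercive uniformly in \<open>t \<ge> t\<^sub>0\<close>, since \<open>t - 1 > -\<mu>\<close>; together with a
  discrete Sobolev inequality it even dominates \<open>c N x\<^sub>k\<^sup>2\<close> for every coordinate, with \<open>c\<close>
  independent of \<open>N\<close>. Completing the square, i.e. translating Lebesgue measure, then yields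
  \<open>\<integral> e\<^bsup>s x\<^sub>k\<^esup> weight \<le> e\<^bsup>C s\<^sup>2\<^esup> Z\<^sub>N\<close> uniformly in \<open>N\<close> and \<open>k\<close>, and
  \<open>u\<^sup>4 \<le> 256 (e\<^sup>u + e\<^bsup>-u\<^esup>)\<close> turns this into the bound on the average of the \<open>x\<^sub>k\<^sup>4\<close>.\<close>

definition cyclic_energy :: "nat \<Rightarrow> (nat \<Rightarrow> real) \<Rightarrow> real" where
  "cyclic_energy N x = (\<Sum>k<N. (x ((k + 1) mod N) - x k)^2)"

lemma cyclic_pred_succ:
  assumes "(k::nat) < N"
  shows "((k + 1) mod N + N - 1) mod N = k"
proof (cases "k + 1 < N")
  case True
  then have "(k + 1) mod N + N - 1 = k + N" by simp
  then show ?thesis using assms by simp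
next
  case False
  then have "k + 1 = N" using assms by auto
  then show ?thesis using assms by auto
qed

lemma cyclic_succ_pred:
  assumes "(k::nat) < N"
  shows "((k + N - 1) mod N + 1) mod N = k"
proof (cases "k = 0")
  case True
  then have "(k + N - 1) mod N + 1 = N" using assms by simp
  then show ?thesis using True by simp
next
  case False
  have "k + N - 1 = (k - 1) + N" using False by simp
  also have "\<dots> mod N = k - 1" using assms by simp
  finally have "(k + N - 1) mod N + 1 = k" using False by simp
  then show ?thesis using assms by simp
qed

lemma sum_cyclic_succ:
  assumes "0 < (N::nat)"
  shows "(\<Sum>k<N. f ((k + 1) mod N)) = (\<Sum>k<N. (f k :: 'a::comm_monoid_add))"
proof (rule sum.reindex_bij_witness[where i="\<lambda>k. (k + N - 1) mod N" and j="\<lambda>k. (k + 1) mod N"])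
  fix a assume "a \<in> {..<N}"
  then show "((a + 1) mod N + N - 1) mod N = a" "((a + N - 1) mod N + 1) mod N = a"
    using cyclic_pred_succ cyclic_succ_pred by simp_all
  show "(a + 1) mod N \<in> {..<N}" "(a + N - 1) mod N \<in> {..<N}" using assms by simp_all
qed simp

lemma sum_mult_cyclic_pred:
  fixes N :: nat
  assumes "0 < N"
  shows "(\<Sum>k<N. x k * z ((k + N - 1) mod N)) = (\<Sum>k<N. x ((k + 1) mod N) * (z k :: real))"
proof -
  have "(\<Sum>k<N. x k * z ((k + N - 1) mod N))
      = (\<Sum>k<N. x ((k + 1) mod N) * z (((k + 1) mod N + N - 1) mod N))"
    by (rule sum_cyclic_succ[symmetric, OF assms, of "\<lambda>k. x k * z ((k + N - 1) mod N)"])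
  also have "\<dots> = (\<Sum>k<N. x ((k + 1) mod N) * z k)"
    by (intro sum.cong refl) (simp only: cyclic_pred_succ lessThan_iff)
  finally show ?thesis .
qed

lemma cyclic_energy_eq:
  fixes N :: nat
  assumes "0 < N"
  shows "cyclic_energy N x = 2 * (\<Sum>k<N. (x k)^2) - 2 * (\<Sum>k<N. x k * x ((k + 1) mod N))"
proof -
  have "(\<Sum>k<N. (x ((k + 1) mod N))^2) = (\<Sum>k<N. (x k)^2)"
    using sum_cyclic_succ[OF assms, of "\<lambda>k. (x k)^2"] .
  moreover have "cyclic_energy N x = (\<Sum>k<N. (x ((k + 1) mod N))^2) + (\<Sum>k<N. (x k)^2)
      - 2 * (\<Sum>k<N. x k * x ((k + 1) mod N))"
    unfolding cyclic_energy_def power2_diff by (simp add: sum.distrib sum_subtractf sum_distrib_left mult_ac)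
  ultimately show ?thesis by simp
qed

text \<open>A discrete Sobolev inequality: on the cycle, a sum-zero vector is bounded pointwise by
  the total variation, and Cauchy-Schwarz turns the total variation into the energy.\<close>

lemma sq_le_card_mult_cyclic_energy:
  assumes N: "0 < N" and s: "(\<Sum>k<N. x k) = 0" and k: "k < N"
  shows "(x k)^2 \<le> real N * cyclic_energy N x"
proof -
  define S where "S = (\<Sum>i<N. \<bar>x ((i + 1) mod N) - x i\<bar>)"
  have diff: "\<bar>x b - x a\<bar> \<le> S" if "a < N" "b < N" for a b
  proof -
    have path: "\<bar>x d - x c\<bar> \<le> S" if "c \<le> d" "d < N" for c d
    proof -
      have "x d - x c = (\<Sum>i = c..<d. x (Suc i) - x i)" using sum_Suc_diff'[OF \<open>c \<le> d\<close>, of x] by simp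
      also have "\<dots> = (\<Sum>i = c..<d. x ((i + 1) mod N) - x i)" by (rule sum.cong) (use that in auto)
      also have "\<bar>\<dots>\<bar> \<le> (\<Sum>i = c..<d. \<bar>x ((i + 1) mod N) - x i\<bar>)" by (rule sum_abs)
      also have "\<dots> \<le> S" unfolding S_def by (rule sum_mono2) (use that in auto)
      finally show ?thesis .
    qed
    show ?thesis
    proof (cases "a \<le> b")
      case True
      then show ?thesis using path[of a b] that by simp
    next
      case False
      then show ?thesis using path[of b a] that by (simp add: abs_minus_commute)
    qed
  qed
  have "real N * \<bar>x k\<bar> = \<bar>\<Sum>j<N. x k - x j\<bar>"
    using s by (simp add: sum_subtractf abs_mult)
  also have "\<dots> \<le> (\<Sum>j<N. \<bar>x k - x j\<bar>)" by (rule sum_abs)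
  also have "\<dots> \<le> real N * S"
    using sum_mono[of "{..<N}" "\<lambda>j. \<bar>x k - x j\<bar>" "\<lambda>_. S"] diff[OF _ k] by simp
  finally have "\<bar>x k\<bar> \<le> \<bar>S\<bar>" using N by simp
  then have "(x k)^2 \<le> S^2" by (simp only: abs_le_square_iff)
  also have "\<dots> \<le> (\<Sum>i<N. \<bar>x ((i + 1) mod N) - x i\<bar>^2) * real (card {..<N})"
    unfolding S_def by (rule sum_squared_le_sum_of_squares)
  also have "\<dots> = real N * cyclic_energy N x" by (simp add: cyclic_energy_def)
  finally show ?thesis .
qed

section \<open>The discrete Wirtinger inequality\<close>

lemma sum_cis_multiple_eq_0:
  fixes N :: nat and m :: int
  assumes N: "0 < N" and m0: "m \<noteq> 0" and mN: "\<bar>m\<bar> < int N"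
  shows "(\<Sum>j<N. cis (2*pi*real j*real_of_int m/real N)) = 0"
proof -
  define z where "z = cis (2*pi*real_of_int m/real N)"
  have zj: "cis (2*pi*real j*real_of_int m/real N) = z^j" for j
    unfolding z_def Complex.DeMoivre by (simp add: field_simps)
  have zN: "z^N = 1"
  proof -
    have "z^N = cis (real N * (2*pi*real_of_int m/real N))" unfolding z_def Complex.DeMoivre ..
    also have "\<dots> = cis (2*pi*real_of_int m)" using N by simp
    also have "\<dots> = 1" by (rule cis_multiple_2pi) simp
    finally show ?thesis .
  qed
  have z1: "z \<noteq> 1"
  proof
    assume "z = 1"
    then have "cos (2*pi*real_of_int m/real N) = 1" unfolding z_def
      by (metis complex.sel(1) one_complex.sel(1) cis.sel(1))
    then obtain n :: int where "2*pi*real_of_int m/real N = real_of_int n * 2 * pi"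
      using cos_one_2pi_int by blast
    then have "real_of_int m = real_of_int n * real N" using N
      by (simp add: field_simps)
    then have "m = n * int N" by (metis of_int_eq_iff of_int_mult of_int_of_nat_eq)
    moreover have "n \<noteq> 0" using m0 \<open>m = n * int N\<close> by auto
    then have "1 \<le> \<bar>n\<bar>" by simp
    then have "int N \<le> \<bar>n\<bar> * int N" using mult_right_mono[of 1 "\<bar>n\<bar>" "int N"] by simp
    then have "\<bar>m\<bar> \<ge> int N" using \<open>m = n * int N\<close> by (simp add: abs_mult)
    then show False using mN by simp
  qed
  show ?thesis unfolding zj using z1 zN by (simp add: sum_gp_strict)
qed

lemma sum_cis_orthogonality:
  assumes N: "0 < N" and k: "k < N" and l: "l < N"
  shows "(\<Sum>j<N. cis (2*pi*real j*(real k - real l)/real N)) = (if k = l then of_nat N else 0)"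
proof (cases "k = l")
  case True then show ?thesis by simp
next
  case False
  have "real k - real l = real_of_int (int k - int l)" by simp
  then have "(\<Sum>j<N. cis (2*pi*real j*(real k - real l)/real N)) =
     (\<Sum>j<N. cis (2*pi*real j*real_of_int (int k - int l)/real N))" by simp
  also have "\<dots> = 0" by (rule sum_cis_multiple_eq_0) (use N k l False in auto)
  finally show ?thesis using False by simp
qed

definition dft :: "nat \<Rightarrow> (nat \<Rightarrow> real) \<Rightarrow> nat \<Rightarrow> complex" where
  "dft N f j = (\<Sum>k<N. of_real (f k) * cis (2*pi*real j*real k/real N))"

lemma parseval_dft:
  assumes N: "0 < N"
  shows "(\<Sum>j<N. (cmod (dft N f j))^2) = real N * (\<Sum>k<N. (f k)^2)"
proof -
  have "complex_of_real (\<Sum>j<N. (cmod (dft N f j))^2) = (\<Sum>j<N. dft N f j * cnj (dft N f j))"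
    by (simp only: of_real_sum complex_norm_square)
  also have "\<dots> = (\<Sum>j<N. \<Sum>k<N. \<Sum>l<N. of_real (f k * f l) * cis (2*pi*real j*(real k - real l)/real N))"
  proof (rule sum.cong[OF refl])
    fix j
    have "dft N f j * cnj (dft N f j) = (\<Sum>k<N. \<Sum>l<N. (of_real (f k) * cis (2*pi*real j*real k/real N)) *
            (of_real (f l) * cis (- (2*pi*real j*real l/real N))))"
      unfolding dft_def cnj_sum sum_product by (simp add: cis_cnj)
    also have "\<dots> = (\<Sum>k<N. \<Sum>l<N. of_real (f k * f l) * cis (2*pi*real j*(real k - real l)/real N))"
    proof (intro sum.cong refl)
      fix k l
      have e: "2*pi*real j*real k/real N + - (2*pi*real j*real l/real N) = 2*pi*real j*(real k - real l)/real N"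
        by (simp add: right_diff_distrib diff_divide_distrib)
      have "(of_real (f k) * cis (2*pi*real j*real k/real N)) * (of_real (f l) * cis (- (2*pi*real j*real l/real N)))
          = of_real (f k * f l) * (cis (2*pi*real j*real k/real N) * cis (- (2*pi*real j*real l/real N)))"
        by (simp add: algebra_simps)
      also have "\<dots> = of_real (f k * f l) * cis (2*pi*real j*(real k - real l)/real N)"
        unfolding cis_mult e ..
      finally show "(of_real (f k) * cis (2*pi*real j*real k/real N)) * (of_real (f l) * cis (- (2*pi*real j*real l/real N)))
          = of_real (f k * f l) * cis (2*pi*real j*(real k - real l)/real N)" .
    qed
    finally show "dft N f j * cnj (dft N f j) = \<dots>" .
  qed
  also have "\<dots> = (\<Sum>k<N. \<Sum>l<N. of_real (f k * f l) * (\<Sum>j<N. cis (2*pi*real j*(real k - real l)/real N)))"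
    by (subst sum.swap, rule sum.cong[OF refl], subst sum.swap) (simp add: sum_distrib_left)
  also have "\<dots> = (\<Sum>k<N. \<Sum>l<N. of_real (f k * f l) * (if k = l then of_nat N else 0))"
    by (intro sum.cong refl) (simp add: sum_cis_orthogonality N)
  also have "\<dots> = (\<Sum>k<N. of_real (f k * f k) * of_nat N)"
  proof (rule sum.cong[OF refl])
    fix k assume k: "k \<in> {..<N}"
    have "(\<Sum>l<N. of_real (f k * f l) * (if k = l then (of_nat N::complex) else 0)) =
          (\<Sum>l<N. if k = l then of_real (f k * f l) * of_nat N else 0)"
      by (rule sum.cong) auto
    also have "\<dots> = of_real (f k * f k) * of_nat N" using k by (subst sum.delta') auto
    finally show "(\<Sum>l<N. of_real (f k * f l) * (if k = l then (of_nat N::complex) else 0)) =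
          of_real (f k * f k) * of_nat N" .
  qed
  also have "\<dots> = complex_of_real (real N * (\<Sum>k<N. (f k)^2))"
    by (simp add: sum_distrib_left power2_eq_square mult.commute)
  finally show ?thesis by (simp only: of_real_eq_iff)
qed

lemma cos_2pi_mult_le:
  assumes "1 \<le> j" "j < N"
  shows "cos (2*pi*real j/real N) \<le> cos (2*pi/real N)"
proof -
  have first_half: "cos (2*pi*real i/real N) \<le> cos (2*pi/real N)" if "1 \<le> i" "2*i \<le> N" for i
  proof (rule cos_monotone_0_pi_le)
    have "real N > 0" using that by simp
    show "0 \<le> 2*pi/real N" by simp
    show "2*pi/real N \<le> 2*pi*real i/real N" using that \<open>real N > 0\<close>
      by (intro divide_right_mono) auto
    have "2 * real i \<le> real N" using that by linarith
    then show "2*pi*real i/real N \<le> pi" using \<open>real N > 0\<close>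
      by (simp add: field_simps)
  qed
  show ?thesis
  proof (cases "2*j \<le> N")
    case True then show ?thesis using first_half assms by auto
  next
    case False
    define i where "i = N - j"
    have i: "1 \<le> i" "2*i \<le> N" using False assms unfolding i_def by auto
    have "2*pi*real j/real N = 2*pi - 2*pi*real i/real N" using assms unfolding i_def
      by (simp add: of_nat_diff field_simps)
    then have "cos (2*pi*real j/real N) = cos (2*pi*real i/real N)"
      by (simp add: cos_diff)
    then show ?thesis using first_half[OF i] by simp
  qed
qed

lemma four_sin_sq_le_norm_one_minus_cis:
  assumes "1 \<le> j" "j < N"
  shows "4 * (sin (pi/real N))^2 \<le> (cmod (1 - cis (2*pi*real j/real N)))^2"
proof -
  have "4 * (sin (pi/real N))^2 = 2 - 2 * cos (2*pi/real N)"
    using cos_double_sin[of "pi/real N"] by simp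
  also have "\<dots> \<le> 2 - 2 * cos (2*pi*real j/real N)"
    using cos_2pi_mult_le[OF assms] by simp
  also have "\<dots> = (1 - cos (2*pi*real j/real N))^2 + (sin (2*pi*real j/real N))^2"
    using sin_cos_squared_add[of "2*pi*real j/real N"] by (simp add: power2_diff)
  also have "\<dots> = (cmod (1 - cis (2*pi*real j/real N)))^2" by (simp add: cmod_power2)
  finally show ?thesis .
qed

lemma cis_cyclic_succ:
  assumes "k < N"
  shows "cis (2*pi*real j*real ((k+1) mod N)/real N) = cis (2*pi*real j/real N) * cis (2*pi*real j*real k/real N)"
proof (cases "k + 1 < N")
  case True then show ?thesis
    by (simp add: cis_mult algebra_simps add_divide_distrib)
next
  case False
  then have "real k + 1 = real N" using assms by simp
  have "2*pi*real j/real N + 2*pi*real j*real k/real N = 2*pi*real j*(real k + 1)/real N"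
    by (simp add: distrib_left add_divide_distrib)
  also have "\<dots> = 2*pi*real j" using \<open>real k + 1 = real N\<close> assms by simp
  finally have "2*pi*real j/real N + 2*pi*real j*real k/real N = 2*pi*real j" .
  then have "cis (2*pi*real j/real N) * cis (2*pi*real j*real k/real N) = 1"
    by (simp add: cis_mult cis_multiple_2pi)
  moreover have "k + 1 = N" using False assms by simp
  then have "(k + 1) mod N = 0" by simp
  ultimately show ?thesis by simp
qed

lemma dft_backward_difference:
  assumes "0 < N"
  shows "dft N (\<lambda>k. x k - x ((k+N-1) mod N)) j = (1 - cis (2*pi*real j/real N)) * dft N x j"
proof -
  have "(\<Sum>k<N. of_real (x ((k+N-1) mod N)) * cis (2*pi*real j*real k/real N))
      = (\<Sum>k<N. of_real (x (((k+1) mod N+N-1) mod N)) * cis (2*pi*real j*real ((k+1) mod N)/real N))"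
    by (rule sum_cyclic_succ[symmetric, OF assms])
  also have "\<dots> = (\<Sum>k<N. of_real (x k) * (cis (2*pi*real j/real N) * cis (2*pi*real j*real k/real N)))"
    by (rule sum.cong[OF refl]) (simp only: cyclic_pred_succ lessThan_iff cis_cyclic_succ)
  also have "\<dots> = cis (2*pi*real j/real N) * dft N x j"
    unfolding dft_def by (simp add: sum_distrib_left algebra_simps)
  finally show ?thesis
    unfolding dft_def by (simp add: sum_subtractf algebra_simps)
qed

lemma cyclic_energy_eq_backward:
  assumes "0 < N"
  shows "cyclic_energy N x = (\<Sum>k<N. (x k - x ((k+N-1) mod N))^2)"
proof -
  have "(\<Sum>k<N. (x k - x ((k+N-1) mod N))^2) = (\<Sum>k<N. (x ((k+1) mod N) - x (((k+1) mod N + N - 1) mod N))^2)"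
    by (rule sum_cyclic_succ[symmetric, OF assms])
  also have "\<dots> = cyclic_energy N x" unfolding cyclic_energy_def
    by (rule sum.cong[OF refl]) (simp only: cyclic_pred_succ lessThan_iff)
  finally show ?thesis by simp
qed

text \<open>The sharp constant is the spectral gap of the cyclic Laplacian: the Fourier transform
  diagonalises it, and on the sum-zero vectors the zero mode vanishes.\<close>

lemma discrete_wirtinger:
  assumes N: "2 \<le> N" and s: "(\<Sum>k<N. x k) = 0"
  shows "4 * (sin (pi/real N))^2 * (\<Sum>k<N. (x k)^2) \<le> cyclic_energy N x"
proof -
  have N0: "0 < N" using N by simp
  define d where "d k = x k - x ((k+N-1) mod N)" for k
  have bound: "4 * (sin (pi/real N))^2 * (cmod (dft N x j))^2 \<le> (cmod (dft N d j))^2" if "j < N" for j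
  proof (cases "j = 0")
    case True
    then show ?thesis using s unfolding dft_def by (simp flip: of_real_sum)
  next
    case False
    have "(cmod (dft N d j))^2 = (cmod (1 - cis (2*pi*real j/real N)))^2 * (cmod (dft N x j))^2"
      unfolding d_def dft_backward_difference[OF N0] by (simp add: norm_mult power_mult_distrib)
    then show ?thesis
      using four_sin_sq_le_norm_one_minus_cis[of j N] False that by (simp add: mult_right_mono)
  qed
  have "real N * (4 * (sin (pi/real N))^2 * (\<Sum>k<N. (x k)^2)) =
        4 * (sin (pi/real N))^2 * (\<Sum>j<N. (cmod (dft N x j))^2)"
    using parseval_dft[OF N0, of x] by simp
  also have "\<dots> = (\<Sum>j<N. 4 * (sin (pi/real N))^2 * (cmod (dft N x j))^2)"
    by (simp add: sum_distrib_left)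
  also have "\<dots> \<le> (\<Sum>j<N. (cmod (dft N d j))^2)" by (rule sum_mono) (use bound in auto)
  also have "\<dots> = real N * cyclic_energy N x"
    using parseval_dft[OF N0, of d] unfolding d_def cyclic_energy_eq_backward[OF N0] .
  finally show ?thesis using N0 by (simp add: mult_le_cancel_left_pos)
qed

section \<open>Coercivity of the quadratic form\<close>

definition laplacian_form :: "real \<Rightarrow> nat \<Rightarrow> real \<Rightarrow> (nat \<Rightarrow> real) \<Rightarrow> (nat \<Rightarrow> real) \<Rightarrow> real" where
  "laplacian_form \<mu> N t x z = (\<Sum>k<N. x k * (KN \<mu> N z k + (t - 1) * z k))"

lemma laplacian_form_eq:
  fixes N :: nat
  assumes "0 < N"
  shows "laplacian_form \<mu> N t x z = \<mu> / (4 * (sin (pi / real N))^2) *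
      (2 * (\<Sum>k<N. x k * z k) - (\<Sum>k<N. x k * z ((k + 1) mod N)) - (\<Sum>k<N. x ((k + 1) mod N) * z k))
      + (t - 1) * (\<Sum>k<N. x k * z k)"
proof -
  define c where "c = \<mu> / (4 * (sin (pi / real N))^2)"
  have "laplacian_form \<mu> N t x z = (\<Sum>k<N. c * (2 * (x k * z k) - x k * z ((k + 1) mod N)
      - x k * z ((k + N - 1) mod N)) + (t - 1) * (x k * z k))"
    unfolding laplacian_form_def KN_def c_def[symmetric] by (intro sum.cong refl) (simp add: algebra_simps)
  also have "\<dots> = c * (2 * (\<Sum>k<N. x k * z k) - (\<Sum>k<N. x k * z ((k + 1) mod N))
      - (\<Sum>k<N. x k * z ((k + N - 1) mod N))) + (t - 1) * (\<Sum>k<N. x k * z k)"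
    by (simp add: sum.distrib sum_subtractf sum_distrib_left right_diff_distrib)
  finally show ?thesis unfolding c_def sum_mult_cyclic_pred[OF assms] .
qed

lemma laplacian_form_commute:
  assumes "0 < N"
  shows "laplacian_form \<mu> N t x z = laplacian_form \<mu> N t z x"
  unfolding laplacian_form_eq[OF assms] by (simp add: mult.commute)

lemma laplacian_form_diag:
  assumes "0 < N"
  shows "laplacian_form \<mu> N t x x =
    \<mu> / (4 * (sin (pi / real N))^2) * cyclic_energy N x + (t - 1) * (\<Sum>k<N. (x k)^2)"
  unfolding laplacian_form_eq[OF assms] cyclic_energy_eq[OF assms]
  by (simp add: power2_eq_square mult.commute)

lemma laplacian_form_add_left:
  "laplacian_form \<mu> N t (\<lambda>k. x k + x' k) z = laplacian_form \<mu> N t x z + laplacian_form \<mu> N t x' z"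
  unfolding laplacian_form_def by (simp add: distrib_right sum.distrib)

lemma laplacian_form_add_right:
  assumes "0 < N"
  shows "laplacian_form \<mu> N t x (\<lambda>k. z k + z' k) = laplacian_form \<mu> N t x z + laplacian_form \<mu> N t x z'"
proof -
  have "laplacian_form \<mu> N t x (\<lambda>k. z k + z' k) = laplacian_form \<mu> N t (\<lambda>k. z k + z' k) x"
    by (rule laplacian_form_commute[OF assms])
  also have "\<dots> = laplacian_form \<mu> N t z x + laplacian_form \<mu> N t z' x"
    by (rule laplacian_form_add_left)
  finally show ?thesis
    by (simp add: laplacian_form_commute[OF assms, of _ _ z] laplacian_form_commute[OF assms, of _ _ z'])
qed

lemma laplacian_form_sum_left:
  "laplacian_form \<mu> N t (\<lambda>k. \<Sum>j\<in>J. c j * f j k) z = (\<Sum>j\<in>J. c j * laplacian_form \<mu> N t (f j) z)"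
proof -
  have "laplacian_form \<mu> N t (\<lambda>k. \<Sum>j\<in>J. c j * f j k) z
      = (\<Sum>k<N. \<Sum>j\<in>J. c j * (f j k * (KN \<mu> N z k + (t - 1) * z k)))"
    unfolding laplacian_form_def sum_distrib_right by (simp add: mult.assoc)
  also have "\<dots> = (\<Sum>j\<in>J. c j * laplacian_form \<mu> N t (f j) z)"
    unfolding laplacian_form_def sum_distrib_left by (rule sum.swap)
  finally show ?thesis .
qed

lemma laplacian_form_sum_right:
  assumes "0 < N"
  shows "laplacian_form \<mu> N t x (\<lambda>k. \<Sum>j\<in>J. c j * f j k) = (\<Sum>j\<in>J. c j * laplacian_form \<mu> N t x (f j))"
proof -
  have "laplacian_form \<mu> N t x (\<lambda>k. \<Sum>j\<in>J. c j * f j k) = laplacian_form \<mu> N t (\<lambda>k. \<Sum>j\<in>J. c j * f j k) x"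
    by (rule laplacian_form_commute[OF assms])
  also have "\<dots> = (\<Sum>j\<in>J. c j * laplacian_form \<mu> N t (f j) x)"
    by (rule laplacian_form_sum_left)
  finally show ?thesis by (simp add: laplacian_form_commute[OF assms, of _ _ "f _"])
qed

lemma mult_sum_sq_le_cyclic_energy:
  fixes N :: nat
  assumes N: "2 \<le> N" and s: "(\<Sum>k<N. x k) = 0" and \<mu>: "0 \<le> \<mu>"
  shows "\<mu> * (\<Sum>k<N. (x k)^2) \<le> \<mu> / (4 * (sin (pi / real N))^2) * cyclic_energy N x"
proof -
  have "sin (pi / real N) > 0" using N by (intro sin_gt_zero) (auto simp: field_simps)
  then have "\<mu> * (\<Sum>k<N. (x k)^2) = \<mu> / (4 * (sin (pi / real N))^2) * (4 * (sin (pi / real N))^2 * (\<Sum>k<N. (x k)^2))"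
    by simp
  also have "\<dots> \<le> \<mu> / (4 * (sin (pi / real N))^2) * cyclic_energy N x"
    using discrete_wirtinger[OF N s] \<mu> by (intro mult_left_mono) auto
  finally show ?thesis .
qed

lemma mult_sq_le_cyclic_energy:
  fixes N :: nat
  assumes N: "2 \<le> N" and s: "(\<Sum>k<N. x k) = 0" and k: "k < N" and \<mu>: "0 \<le> \<mu>"
  shows "\<mu> * real N / (4 * pi^2) * (x k)^2 \<le> \<mu> / (4 * (sin (pi / real N))^2) * cyclic_energy N x"
proof -
  define S where "S = sin (pi / real N)"
  have "S > 0" unfolding S_def using N by (intro sin_gt_zero) (auto simp: field_simps)
  moreover have "S \<le> pi / real N" unfolding S_def by (rule sin_x_le_x) simp
  ultimately have "S^2 \<le> (pi / real N)^2" by (intro power_mono) auto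
  then have "4 * S^2 \<le> 4 * pi^2 / (real N)^2" by (simp add: power_divide)
  then have "\<mu> / (4 * pi^2 / (real N)^2) \<le> \<mu> / (4 * S^2)"
    using \<open>S > 0\<close> \<mu> N by (intro divide_left_mono) auto
  then have "\<mu> * real N * real N / (4 * pi^2) \<le> \<mu> / (4 * S^2)" by (simp add: power2_eq_square)
  moreover have "0 \<le> cyclic_energy N x" unfolding cyclic_energy_def by (simp add: sum_nonneg)
  ultimately have "\<mu> * real N * real N / (4 * pi^2) * cyclic_energy N x \<le> \<mu> / (4 * S^2) * cyclic_energy N x"
    by (rule mult_right_mono)
  moreover have "\<mu> * real N / (4 * pi^2) * (x k)^2 \<le> \<mu> * real N / (4 * pi^2) * (real N * cyclic_energy N x)"
    using sq_le_card_mult_cyclic_energy[OF _ s k] N \<mu> by (intro mult_left_mono) auto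
  ultimately show ?thesis unfolding S_def by (simp add: mult.assoc)
qed

lemma laplacian_form_ge_energy:
  fixes N :: nat
  assumes N: "2 \<le> N" and s: "(\<Sum>k<N. x k) = 0"
    and m: "0 < m" "m \<le> \<mu>" "m \<le> \<mu> + t - 1"
  shows "m / \<mu> * (\<mu> / (4 * (sin (pi / real N))^2) * cyclic_energy N x) \<le> laplacian_form \<mu> N t x x"
proof -
  define E where "E = \<mu> / (4 * (sin (pi / real N))^2) * cyclic_energy N x"
  define Q where "Q = (\<Sum>k<N. (x k)^2)"
  have \<mu>Q: "\<mu> * Q \<le> E" unfolding E_def Q_def using mult_sum_sq_le_cyclic_energy[OF N s] m by simp
  have "0 \<le> Q" unfolding Q_def by (simp add: sum_nonneg)
  then have "0 \<le> E" using \<mu>Q m by (meson dual_order.trans less_le_trans mult_nonneg_nonneg less_imp_le)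
  have "m * E \<le> \<mu> * (E + (t - 1) * Q)"
  proof (cases "1 \<le> t")
    case True
    then have "0 \<le> \<mu> * ((t - 1) * Q)" using \<open>0 \<le> Q\<close> m by simp
    moreover have "m * E \<le> \<mu> * E" using \<open>0 \<le> E\<close> m by (intro mult_right_mono) auto
    ultimately show ?thesis by (simp add: distrib_left)
  next
    case False
    then have "(1 - t) * (\<mu> * Q) \<le> (1 - t) * E" using \<mu>Q by (intro mult_left_mono) auto
    moreover have "m * E \<le> (\<mu> + t - 1) * E" using m \<open>0 \<le> E\<close> by (intro mult_right_mono) auto
    ultimately show ?thesis by (simp add: algebra_simps)
  qed
  then have "m / \<mu> * E \<le> E + (t - 1) * Q" using m by (simp add: pos_divide_le_eq mult.commute)
  moreover have "laplacian_form \<mu> N t x x = E + (t - 1) * Q"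
    unfolding E_def Q_def using N by (intro laplacian_form_diag) simp
  ultimately show ?thesis unfolding E_def by simp
qed

lemma laplacian_form_ge_sum_sq:
  fixes N :: nat
  assumes N: "2 \<le> N" and s: "(\<Sum>k<N. x k) = 0"
    and m: "0 < m" "m \<le> \<mu>" "m \<le> \<mu> + t - 1"
  shows "m * (\<Sum>k<N. (x k)^2) \<le> laplacian_form \<mu> N t x x"
proof -
  have "m * (\<Sum>k<N. (x k)^2) = m / \<mu> * (\<mu> * (\<Sum>k<N. (x k)^2))" using m by simp
  also have "\<dots> \<le> m / \<mu> * (\<mu> / (4 * (sin (pi / real N))^2) * cyclic_energy N x)"
    using mult_sum_sq_le_cyclic_energy[OF N s] m by (intro mult_left_mono) auto
  also have "\<dots> \<le> laplacian_form \<mu> N t x x" by (rule laplacian_form_ge_energy[OF N s m])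
  finally show ?thesis .
qed

lemma laplacian_form_ge_sq:
  fixes N :: nat
  assumes N: "2 \<le> N" and s: "(\<Sum>k<N. x k) = 0" and k: "k < N"
    and m: "0 < m" "m \<le> \<mu>" "m \<le> \<mu> + t - 1"
  shows "m * real N / (4 * pi^2) * (x k)^2 \<le> laplacian_form \<mu> N t x x"
proof -
  have "m * real N / (4 * pi^2) * (x k)^2 = m / \<mu> * (\<mu> * real N / (4 * pi^2) * (x k)^2)"
    using m by simp
  also have "\<dots> \<le> m / \<mu> * (\<mu> / (4 * (sin (pi / real N))^2) * cyclic_energy N x)"
    using mult_sq_le_cyclic_energy[OF N s k] m by (intro mult_left_mono) auto
  also have "\<dots> \<le> laplacian_form \<mu> N t x x" by (rule laplacian_form_ge_energy[OF N s m])
  finally show ?thesis .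
qed

lemma square_system_solvable:
  fixes M :: "nat \<Rightarrow> nat \<Rightarrow> 'a::field"
  assumes inj: "\<And>v. \<forall>j<n. (\<Sum>i<n. M j i * v i) = 0 \<Longrightarrow> \<forall>i<n. v i = 0"
  shows "\<exists>v. \<forall>j<n. (\<Sum>i<n. M j i * v i) = b j"
proof -
  define M' where "M' = Matrix.mat n n (\<lambda>(j, i). M j i)"
  have M': "M' \<in> carrier_mat n n" unfolding M'_def by simp
  have mult_M': "vec_index (mult_mat_vec M' w) j = (\<Sum>i<n. M j i * vec_index w i)"
    if "j < n" "w \<in> carrier_vec n" for j w
    using that unfolding M'_def by (simp add: scalar_prod_def atLeast0LessThan)
  have "Determinant.det M' \<noteq> 0"
  proof
    assume "Determinant.det M' = 0"
    then obtain w where w: "w \<in> carrier_vec n" "w \<noteq> zero_vec n" "mult_mat_vec M' w = zero_vec n"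
      using det_0_iff_vec_prod_zero_field[OF M'] by auto
    have "\<forall>j<n. (\<Sum>i<n. M j i * vec_index w i) = 0"
      using mult_M'[OF _ w(1)] w(3) by simp
    then have "\<forall>i<n. vec_index w i = 0" by (rule inj)
    then have "w = zero_vec n" using w(1) by (intro eq_vecI) auto
    with w(2) show False ..
  qed
  then obtain B where B: "M' * B = one_mat n" "B \<in> carrier_mat n n"
    using det_non_zero_imp_unit[OF M'] unfolding Units_def ring_mat_def by auto
  define u where "u = mult_mat_vec B (Matrix.vec n b)"
  have "mult_mat_vec M' u = Matrix.vec n b"
    unfolding u_def using assoc_mult_mat_vec[OF M' B(2), of "Matrix.vec n b"] B(1) by simp
  moreover have "u \<in> carrier_vec n" unfolding u_def using B(2) by simp
  ultimately show ?thesis using mult_M' by (metis index_vec)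
qed

lemma Amul_add: "Amul N A (\<lambda>i. y i + v i) = (\<lambda>k. Amul N A y k + Amul N A v k)"
  unfolding Amul_def by (simp add: algebra_simps sum.distrib)

lemma Amul_restrict: "Amul N A (\<lambda>i\<in>{..<N - 1}. y i) = Amul N A y"
  unfolding Amul_def by (intro ext sum.cong) auto

lemma sum_Amul_eq_0:
  assumes "is_onb_sum_zero N A"
  shows "(\<Sum>k<N. Amul N A y k) = 0"
proof -
  have "(\<Sum>k<N. Amul N A y k) = (\<Sum>j<N - 1. y j * (\<Sum>k<N. A k j))"
    unfolding Amul_def by (subst sum.swap) (simp add: sum_distrib_left mult.commute)
  also have "\<dots> = 0" using assms unfolding is_onb_sum_zero_def by simp
  finally show ?thesis .
qed

lemma sum_Amul_sq:
  assumes "is_onb_sum_zero N A"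
  shows "(\<Sum>k<N. (Amul N A y k)^2) = (\<Sum>j<N - 1. (y j)^2)"
proof -
  have "(\<Sum>k<N. (Amul N A y k)^2) = (\<Sum>k<N. \<Sum>i<N - 1. \<Sum>j<N - 1. y i * y j * (A k i * A k j))"
    unfolding Amul_def power2_eq_square sum_product by (simp add: algebra_simps)
  also have "\<dots> = (\<Sum>i<N - 1. \<Sum>j<N - 1. y i * y j * (\<Sum>k<N. A k i * A k j))"
    by (subst sum.swap, rule sum.cong[OF refl], subst sum.swap) (simp add: sum_distrib_left)
  also have "\<dots> = (\<Sum>i<N - 1. \<Sum>j<N - 1. if i = j then y i * y j else 0)"
    using assms unfolding is_onb_sum_zero_def by (intro sum.cong refl) simp
  also have "\<dots> = (\<Sum>j<N - 1. (y j)^2)" by (simp add: power2_eq_square)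
  finally show ?thesis .
qed

lemma tP2_plus_Q_eq_laplacian_form:
  "t * Pm 2 N A y + Qf \<mu> N A y = laplacian_form \<mu> N t (Amul N A y) (Amul N A y)"
  unfolding Qf_def Pm_def laplacian_form_def
  by (simp add: sum.distrib sum_distrib_left algebra_simps power2_eq_square sum_subtractf)

lemma laplacian_form_Amul:
  assumes "0 < N"
  shows "laplacian_form \<mu> N t (Amul N A y) (Amul N A v) =
    (\<Sum>j<N - 1. y j * (\<Sum>i<N - 1. laplacian_form \<mu> N t (\<lambda>k. A k j) (\<lambda>k. A k i) * v i))"
proof -
  have Amul_eq: "Amul N A y = (\<lambda>k. \<Sum>j<N - 1. y j * A k j)" for y
    unfolding Amul_def by (simp add: mult.commute)
  show ?thesis
    unfolding Amul_eq laplacian_form_sum_left laplacian_form_sum_right[OF assms]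
    by (simp add: mult.commute)
qed

section \<open>Translation invariance and Gaussian integrability on \<open>RN n\<close>\<close>

lemma product_sigma_finite_lborel: "product_sigma_finite (\<lambda>_::nat. lborel :: real measure)"
  by (simp add: product_sigma_finite_def lborel.sigma_finite_measure_axioms)

lemma measurable_RN_component[measurable]: "(\<lambda>y. y j) \<in> borel_measurable (RN n)"
proof (cases "j < n")
  case True
  have "(\<lambda>y. y j) \<in> measurable (PiM {..<n} (\<lambda>_. lborel)) lborel"
    by (rule measurable_component_singleton) (use True in simp)
  then show ?thesis unfolding RN_def by (metis measurable_cong_sets sets_lborel)
next
  case False
  have "(\<lambda>y. undefined) \<in> borel_measurable (RN n)" by simp
  then show ?thesis
    by (rule measurable_cong[THEN iffD1, rotated])
       (use False in \<open>auto simp: RN_def space_PiM PiE_def extensional_def\<close>)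
qed

lemma Amul_measurable[measurable]: "(\<lambda>y. Amul N A y k) \<in> borel_measurable (RN n)"
  unfolding Amul_def by measurable

lemma weight_measurable[measurable]: "weight \<mu> N A t \<in> borel_measurable (RN n)"
  unfolding weight_def Pm_def Qf_def KN_def by measurable

lemma distr_RN_translate: "distr (RN n) (RN n) (\<lambda>y. \<lambda>i\<in>{..<n}. y i + v i) = RN n"
  unfolding RN_def
proof (rule product_sigma_finite.PiM_eqI[OF product_sigma_finite_lborel])
  let ?T = "\<lambda>y. \<lambda>i\<in>{..<n}. y i + v i"
  show "finite {..<n}" by simp
  show "sets (distr (Pi\<^sub>M {..<n} (\<lambda>_. lborel)) (Pi\<^sub>M {..<n} (\<lambda>_. lborel)) ?T)
      = sets (Pi\<^sub>M {..<n} (\<lambda>_. lborel))" by simp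
  fix B assume B: "\<And>i. i \<in> {..<n} \<Longrightarrow> B i \<in> sets (lborel::real measure)"
  have T: "?T \<in> Pi\<^sub>M {..<n} (\<lambda>_. lborel) \<rightarrow>\<^sub>M Pi\<^sub>M {..<n} (\<lambda>_. lborel)" by measurable
  have preimage: "(\<lambda>u. u + v i) -` B i \<in> sets lborel" if "i < n" for i
  proof -
    have "(\<lambda>u::real. u + v i) \<in> borel_measurable borel" by measurable
    then have "(\<lambda>u. u + v i) -` B i \<in> sets borel"
      by (rule measurable_sets_borel) (use B[of i] that in simp)
    then show ?thesis by simp
  qed
  have "Pi\<^sub>E {..<n} B \<in> sets (Pi\<^sub>M {..<n} (\<lambda>_. lborel))"
    using B by (intro sets_PiM_I_finite) auto
  moreover have "?T -` Pi\<^sub>E {..<n} B \<inter> space (Pi\<^sub>M {..<n} (\<lambda>_. lborel))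
      = Pi\<^sub>E {..<n} (\<lambda>i. (\<lambda>u. u + v i) -` B i)"
    by (auto simp: space_PiM PiE_def Pi_def extensional_def)
  ultimately have "emeasure (distr (Pi\<^sub>M {..<n} (\<lambda>_. lborel)) (Pi\<^sub>M {..<n} (\<lambda>_. lborel)) ?T) (Pi\<^sub>E {..<n} B)
      = emeasure (Pi\<^sub>M {..<n} (\<lambda>_. lborel)) (Pi\<^sub>E {..<n} (\<lambda>i. (\<lambda>u. u + v i) -` B i))"
    using T by (simp add: emeasure_distr)
  also have "\<dots> = (\<Prod>i<n. emeasure lborel ((\<lambda>u. u + v i) -` B i))"
    using preimage by (subst product_sigma_finite.emeasure_PiM[OF product_sigma_finite_lborel]) auto
  also have "\<dots> = (\<Prod>i<n. emeasure lborel (B i))"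
  proof (intro prod.cong refl)
    fix i assume "i \<in> {..<n}"
    then have Bi: "B i \<in> sets borel" using B by simp
    have "emeasure lborel (B i) = emeasure (distr lborel borel ((+) (v i))) (B i)"
      by (simp add: lborel_distr_plus)
    also have "\<dots> = emeasure lborel ((+) (v i) -` B i \<inter> space lborel)"
      by (rule emeasure_distr) (use Bi in auto)
    moreover have "(\<lambda>u. u + v i) = (+) (v i)" by (auto simp: add.commute)
    ultimately show "emeasure lborel ((\<lambda>u. u + v i) -` B i) = emeasure lborel (B i)" by simp
  qed
  finally show "emeasure (distr (Pi\<^sub>M {..<n} (\<lambda>_. lborel)) (Pi\<^sub>M {..<n} (\<lambda>_. lborel)) ?T) (Pi\<^sub>E {..<n} B)
      = (\<Prod>i\<in>{..<n}. emeasure lborel (B i))" by simp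
qed

lemma integral_RN_translate:
  fixes f :: "(nat \<Rightarrow> real) \<Rightarrow> real"
  assumes "f \<in> borel_measurable (RN n)"
  shows "(\<integral>y. f (\<lambda>i\<in>{..<n}. y i + v i) \<partial>RN n) = (\<integral>y. f y \<partial>RN n)"
proof -
  have T: "(\<lambda>y. \<lambda>i\<in>{..<n}. y i + v i) \<in> RN n \<rightarrow>\<^sub>M RN n" unfolding RN_def by measurable
  have "(\<integral>y. f y \<partial>RN n) = (\<integral>y. f y \<partial>distr (RN n) (RN n) (\<lambda>y. \<lambda>i\<in>{..<n}. y i + v i))"
    by (simp add: distr_RN_translate)
  also have "\<dots> = (\<integral>y. f (\<lambda>i\<in>{..<n}. y i + v i) \<partial>RN n)" by (rule integral_distr[OF T assms])
  finally show ?thesis ..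
qed

lemma integrable_exp_affine_minus_sq:
  fixes a c :: real
  assumes c: "0 < c"
  shows "integrable lborel (\<lambda>u. exp (a * u - c * u^2))"
proof -
  define m where "m = a / (2 * c)"
  define s where "s = sqrt (1 / (2 * c))"
  have s: "0 < s" "s^2 = 1 / (2 * c)" unfolding s_def using c by simp_all
  define K where "K = exp (a^2 / (4 * c)) * sqrt (2 * pi * s^2)"
  have "integrable lborel (\<lambda>u. K * normal_density m s u)"
    using integrable_normal_density[OF s(1)] by simp
  moreover have "K * normal_density m s u = exp (a * u - c * u^2)" for u
  proof -
    have "K * normal_density m s u = exp (a^2 / (4 * c)) * exp (- ((u - m)^2) / (2 * s^2))"
      unfolding K_def normal_density_def using s c by simp
    also have "\<dots> = exp (a^2 / (4 * c) - (u - m)^2 * c)" unfolding s(2)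
      using c by (simp add: exp_add[symmetric] field_simps)
    also have "a^2 / (4 * c) - (u - m)^2 * c = a * u - c * u^2"
      unfolding m_def using c by (simp add: field_simps power2_eq_square)
    finally show ?thesis .
  qed
  ultimately show ?thesis by simp
qed

lemma integrable_RN_exp_linear_mult:
  fixes c :: real
  assumes c: "0 < c" and g: "g \<in> borel_measurable (RN n)"
    and bound: "\<And>y. \<bar>g y\<bar> \<le> exp (- c * (\<Sum>j<n. (y j)^2))"
  shows "integrable (RN n) (\<lambda>y. exp (\<Sum>j<n. a j * y j) * g y)"
proof -
  define h where "h y = (\<Prod>j<n. exp (a j * y j - c * (y j)^2))" for y :: "nat \<Rightarrow> real"
  have "integrable (RN n) h" unfolding RN_def h_def
    by (rule product_sigma_finite.product_integrable_prod[OF product_sigma_finite_lborel])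
      (auto intro: integrable_exp_affine_minus_sq[OF c])
  then show ?thesis
  proof (rule Bochner_Integration.integrable_bound)
    show "(\<lambda>y. exp (\<Sum>j<n. a j * y j) * g y) \<in> borel_measurable (RN n)" using g by measurable
    show "AE y in RN n. norm (exp (\<Sum>j<n. a j * y j) * g y) \<le> norm (h y)"
    proof (rule AE_I2)
      fix y :: "nat \<Rightarrow> real"
      have "norm (exp (\<Sum>j<n. a j * y j) * g y) \<le> exp (\<Sum>j<n. a j * y j) * exp (- c * (\<Sum>j<n. (y j)^2))"
        using bound[of y] by (simp add: abs_mult)
      also have "\<dots> = h y" unfolding h_def
        by (simp add: exp_sum[symmetric] exp_add[symmetric] sum_subtractf sum_distrib_left sum_negf)
      also have "\<dots> \<le> norm (h y)" by simp
      finally show "norm (exp (\<Sum>j<n. a j * y j) * g y) \<le> norm (h y)" .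
    qed
  qed
qed

section \<open>Exponential and fourth moments\<close>

lemma divide_le_of_le_mult:
  fixes a b c :: real
  assumes "a \<le> c * b" and "0 \<le> b" and "0 \<le> c"
  shows "a / b \<le> c"
  using assms by (cases "b = 0") (simp_all add: pos_divide_le_eq)

lemma mult_minus_sq_le:
  fixes c s x :: real
  assumes "0 < c"
  shows "s * x - c * x^2 \<le> s^2 / (4 * c)"
proof -
  have "4 * c * (s * x - c * x^2) = s^2 - (s - 2 * c * x)^2" by (simp add: power2_eq_square algebra_simps)
  also have "\<dots> \<le> s^2" by simp
  finally show ?thesis using assms by (simp add: field_simps)
qed

lemma pow4_le_exp: "(u::real)^4 \<le> 256 * (exp u + exp (- u))"
proof -
  have pos: "x^4 \<le> 256 * exp x" if "x \<ge> 0" for x :: real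
  proof -
    have "x / 4 \<le> exp (x / 4)" using exp_ge_add_one_self[of "x / 4"] by linarith
    then have "(x / 4)^4 \<le> (exp (x / 4))^4" using that by (intro power_mono) auto
    also have "(exp (x / 4))^4 = exp x" by (simp add: exp_of_nat_mult[symmetric])
    finally show ?thesis by (simp add: power_divide)
  qed
  have "u^4 \<le> 256 * exp u \<or> u^4 \<le> 256 * exp (- u)"
    using pos[of u] pos[of "- u"] by (cases "u \<ge> 0") simp_all
  moreover have "0 < exp u" "0 < exp (- u)" by simp_all
  ultimately show ?thesis by (smt (verit))
qed

lemma weight_nonneg: "0 \<le> weight \<mu> N A t y"
  unfolding weight_def by simp

locale coercive_chain =
  fixes \<mu> t m :: real and N :: nat and A :: "nat \<Rightarrow> nat \<Rightarrow> real"
  assumes m_pos: "0 < m" and m_le_mu: "m \<le> \<mu>" and m_le_mass: "m \<le> \<mu> + t - 1"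
    and two_le_N: "2 \<le> N" and onb: "is_onb_sum_zero N A"
begin

lemma N_pos: "0 < N"
  using two_le_N by simp

definition energy :: "(nat \<Rightarrow> real) \<Rightarrow> real" where
  "energy y = laplacian_form \<mu> N t (Amul N A y) (Amul N A y) / (2 * real N)"

lemma weight_eq: "weight \<mu> N A t y = exp (- energy y)"
  unfolding weight_def energy_def tP2_plus_Q_eq_laplacian_form by simp

lemma weight_restrict: "weight \<mu> N A t (\<lambda>i\<in>{..<N - 1}. y i) = weight \<mu> N A t y"
  unfolding weight_eq energy_def Amul_restrict ..

lemma energy_ge_sum_sq: "m / (2 * real N) * (\<Sum>j<N - 1. (y j)^2) \<le> energy y"
  using laplacian_form_ge_sum_sq[OF two_le_N sum_Amul_eq_0[OF onb] m_pos m_le_mu m_le_mass, of y]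
    N_pos
  unfolding energy_def sum_Amul_sq[OF onb] by (simp add: field_simps)

lemma energy_ge_sq:
  assumes "k < N"
  shows "m / (8 * pi^2) * (Amul N A y k)^2 \<le> energy y"
proof -
  have "m * real N / (4 * pi^2) * (Amul N A y k)^2 \<le> laplacian_form \<mu> N t (Amul N A y) (Amul N A y)"
    by (rule laplacian_form_ge_sq[OF two_le_N sum_Amul_eq_0[OF onb] assms m_pos m_le_mu m_le_mass])
  then show ?thesis unfolding energy_def using N_pos by (simp add: field_simps)
qed

lemma energy_add:
  "energy (\<lambda>i. y i + v i) =
    energy y + laplacian_form \<mu> N t (Amul N A y) (Amul N A v) / real N + energy v"
proof -
  let ?a = "Amul N A y" and ?b = "Amul N A v"
  have "laplacian_form \<mu> N t (\<lambda>k. ?a k + ?b k) (\<lambda>k. ?a k + ?b k) =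
      laplacian_form \<mu> N t ?a ?a + laplacian_form \<mu> N t ?a ?b + laplacian_form \<mu> N t ?b ?a + laplacian_form \<mu> N t ?b ?b"
    by (simp add: laplacian_form_add_left laplacian_form_add_right[OF N_pos])
  moreover have "laplacian_form \<mu> N t ?b ?a = laplacian_form \<mu> N t ?a ?b"
    by (rule laplacian_form_commute[OF N_pos])
  ultimately show ?thesis unfolding energy_def Amul_add using N_pos by (simp add: field_simps)
qed

text \<open>Completing the square: the linear functional \<open>y \<mapsto> s (A y)\<^sub>k\<close> is represented by the
  positive definite form, so it can be absorbed by a translation of the variable.\<close>

lemma exists_translation:
  "\<exists>v. \<forall>y. laplacian_form \<mu> N t (Amul N A y) (Amul N A v) = real N * s * Amul N A y k"
proof -
  define G where "G j i = laplacian_form \<mu> N t (\<lambda>k. A k j) (\<lambda>k. A k i)" for j i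
  have "\<exists>v. \<forall>j<N - 1. (\<Sum>i<N - 1. G j i * v i) = real N * s * A k j"
  proof (rule square_system_solvable)
    fix v assume "\<forall>j<N - 1. (\<Sum>i<N - 1. G j i * v i) = 0"
    then have "laplacian_form \<mu> N t (Amul N A v) (Amul N A v) = 0"
      unfolding laplacian_form_Amul[OF N_pos] G_def[symmetric] by simp
    then have "m / (2 * real N) * (\<Sum>j<N - 1. (v j)^2) \<le> 0"
      using energy_ge_sum_sq[of v] unfolding energy_def by simp
    moreover have "0 < m / (2 * real N)" using m_pos N_pos by simp
    ultimately have "(\<Sum>j<N - 1. (v j)^2) \<le> 0" by (metis mult_le_cancel_left_pos mult_zero_right)
    then have "(\<Sum>j<N - 1. (v j)^2) = 0" by (simp add: order.antisym sum_nonneg)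
    then show "\<forall>i<N - 1. v i = 0" by (simp add: sum_nonneg_eq_0_iff)
  qed
  then obtain v where v: "\<forall>j<N - 1. (\<Sum>i<N - 1. G j i * v i) = real N * s * A k j" ..
  have "laplacian_form \<mu> N t (Amul N A y) (Amul N A v) = real N * s * Amul N A y k" for y
    unfolding laplacian_form_Amul[OF N_pos] G_def[symmetric] Amul_def
    using v by (simp add: sum_distrib_left mult_ac)
  then show ?thesis by blast
qed

lemma integrable_exp_linear_weight:
  "integrable (RN (N - 1)) (\<lambda>y. exp (\<Sum>j<N - 1. a j * y j) * weight \<mu> N A t y)"
proof (rule integrable_RN_exp_linear_mult)
  show "0 < m / (2 * real N)" using m_pos N_pos by simp
  show "\<bar>weight \<mu> N A t y\<bar> \<le> exp (- (m / (2 * real N)) * (\<Sum>j<N - 1. (y j)^2))" for y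
    unfolding weight_eq using energy_ge_sum_sq[of y] by simp
qed measurable

lemma integrable_weight: "integrable (RN (N - 1)) (weight \<mu> N A t)"
  using integrable_exp_linear_weight[of "\<lambda>_. 0"] by simp

lemma integrable_exp_Amul_weight:
  "integrable (RN (N - 1)) (\<lambda>y. exp (s * Amul N A y k) * weight \<mu> N A t y)"
  using integrable_exp_linear_weight[of "\<lambda>j. s * A k j"]
  unfolding Amul_def by (simp add: sum_distrib_left mult_ac)

lemma ZN_nonneg: "0 \<le> ZN \<mu> N A t"
  unfolding ZN_def using weight_nonneg by simp

lemma integral_exp_Amul_weight_le:
  assumes k: "k < N"
  shows "(\<integral>y. exp (s * Amul N A y k) * weight \<mu> N A t y \<partial>RN (N - 1)) \<le> exp (2 * pi^2 * s^2 / m) * ZN \<mu> N A t"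
proof -
  obtain v where v: "\<And>y. laplacian_form \<mu> N t (Amul N A y) (Amul N A v) = real N * s * Amul N A y k"
    using exists_translation by blast
  define r where "r = s * Amul N A v k - energy v"
  have translate: "exp (s * Amul N A (\<lambda>i\<in>{..<N - 1}. y i + v i) k) * weight \<mu> N A t (\<lambda>i\<in>{..<N - 1}. y i + v i)
      = exp r * weight \<mu> N A t y" for y
    unfolding Amul_restrict weight_restrict unfolding weight_eq energy_add v Amul_add r_def
    using N_pos by (simp add: mult_exp_exp algebra_simps)
  have "(\<integral>y. exp (s * Amul N A y k) * weight \<mu> N A t y \<partial>RN (N - 1))
      = (\<integral>y. exp (s * Amul N A (\<lambda>i\<in>{..<N - 1}. y i + v i) k) * weight \<mu> N A t (\<lambda>i\<in>{..<N - 1}. y i + v i) \<partial>RN (N - 1))"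
    by (rule integral_RN_translate[symmetric]) measurable
  also have "\<dots> = exp r * ZN \<mu> N A t" unfolding translate ZN_def by simp
  finally have "(\<integral>y. exp (s * Amul N A y k) * weight \<mu> N A t y \<partial>RN (N - 1)) = exp r * ZN \<mu> N A t" .
  moreover have "r \<le> s * Amul N A v k - m / (8 * pi^2) * (Amul N A v k)^2"
    unfolding r_def using energy_ge_sq[OF k] by simp
  moreover have "\<dots> \<le> 2 * pi^2 * s^2 / m"
    using mult_minus_sq_le[of "m / (8 * pi^2)" s "Amul N A v k"] m_pos by (simp add: field_simps)
  ultimately show ?thesis using ZN_nonneg by (simp add: mult_right_mono)
qed

text \<open>The factors \<open>1\<close> and \<open>-1\<close> in the exponents are kept so that the bound matches
  the exponential moments at \<open>s = \<plusminus>1\<close> syntactically.\<close>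

lemma Amul_pow4_weight_le:
  "(Amul N A y k)^4 * weight \<mu> N A t y
    \<le> 256 * (exp (1 * Amul N A y k) * weight \<mu> N A t y + exp ((- 1) * Amul N A y k) * weight \<mu> N A t y)"
proof -
  have "(Amul N A y k)^4 * weight \<mu> N A t y
      \<le> 256 * (exp (Amul N A y k) + exp (- Amul N A y k)) * weight \<mu> N A t y"
    using pow4_le_exp weight_nonneg by (rule mult_right_mono)
  then show ?thesis by (simp add: algebra_simps)
qed

lemma integrable_Amul_pow4_weight:
  "integrable (RN (N - 1)) (\<lambda>y. (Amul N A y k)^4 * weight \<mu> N A t y)"
proof (rule Bochner_Integration.integrable_bound)
  show "integrable (RN (N - 1)) (\<lambda>y. 256 * (exp (1 * Amul N A y k) * weight \<mu> N A t y
      + exp ((- 1) * Amul N A y k) * weight \<mu> N A t y))"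
    using integrable_exp_Amul_weight[of 1 k] integrable_exp_Amul_weight[of "- 1" k]
    by (intro integrable_mult_right Bochner_Integration.integrable_add)
  show "AE y in RN (N - 1). norm ((Amul N A y k)^4 * weight \<mu> N A t y)
      \<le> norm (256 * (exp (1 * Amul N A y k) * weight \<mu> N A t y + exp ((- 1) * Amul N A y k) * weight \<mu> N A t y))"
  proof (rule AE_I2)
    fix y
    have "norm ((Amul N A y k)^4 * weight \<mu> N A t y) = (Amul N A y k)^4 * weight \<mu> N A t y"
      using weight_nonneg[of \<mu> N A t y] by (simp add: abs_mult)
    also have "\<dots> \<le> 256 * (exp (1 * Amul N A y k) * weight \<mu> N A t y + exp ((- 1) * Amul N A y k) * weight \<mu> N A t y)"
      by (rule Amul_pow4_weight_le)
    finally show "norm ((Amul N A y k)^4 * weight \<mu> N A t y)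
      \<le> norm (256 * (exp (1 * Amul N A y k) * weight \<mu> N A t y + exp ((- 1) * Amul N A y k) * weight \<mu> N A t y))"
      by simp
  qed
qed measurable

lemma integral_Amul_pow4_weight_le:
  assumes k: "k < N"
  shows "(\<integral>y. (Amul N A y k)^4 * weight \<mu> N A t y \<partial>RN (N - 1)) \<le> 512 * exp (2 * pi^2 / m) * ZN \<mu> N A t"
proof -
  let ?E = "\<lambda>s. \<integral>y. exp (s * Amul N A y k) * weight \<mu> N A t y \<partial>RN (N - 1)"
  have "(\<integral>y. (Amul N A y k)^4 * weight \<mu> N A t y \<partial>RN (N - 1))
      \<le> (\<integral>y. 256 * (exp (1 * Amul N A y k) * weight \<mu> N A t y
        + exp ((- 1) * Amul N A y k) * weight \<mu> N A t y) \<partial>RN (N - 1))"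
    using integrable_Amul_pow4_weight integrable_exp_Amul_weight Amul_pow4_weight_le
    by (intro integral_mono) (simp_all only: integrable_mult_right Bochner_Integration.integrable_add)
  also have "\<dots> = 256 * (?E 1 + ?E (- 1))"
    using integrable_exp_Amul_weight[of 1 k] integrable_exp_Amul_weight[of "- 1" k] by simp
  also have "\<dots> \<le> 256 * (exp (2 * pi^2 / m) * ZN \<mu> N A t + exp (2 * pi^2 / m) * ZN \<mu> N A t)"
  proof -
    have "?E 1 \<le> exp (2 * pi^2 / m) * ZN \<mu> N A t" "?E (- 1) \<le> exp (2 * pi^2 / m) * ZN \<mu> N A t"
      using integral_exp_Amul_weight_le[OF k, of 1] integral_exp_Amul_weight_le[OF k, of "- 1"]
      by (simp_all only: power2_minus power_one mult_1_right)
    then show ?thesis by (intro mult_left_mono add_mono) simp_all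
  qed
  finally show ?thesis by (simp add: mult_ac)
qed

lemma integrable_Pm4_weight: "integrable (RN (N - 1)) (\<lambda>y. Pm 4 N A y / real N * weight \<mu> N A t y)"
  unfolding Pm_def sum_divide_distrib sum_distrib_right
  using integrable_Amul_pow4_weight by (simp add: mult.commute mult.left_commute)

lemma integral_Pm4_weight_le:
  "(\<integral>y. Pm 4 N A y / real N * weight \<mu> N A t y \<partial>RN (N - 1)) \<le> 512 * exp (2 * pi^2 / m) * ZN \<mu> N A t"
proof -
  have "(\<integral>y. Pm 4 N A y / real N * weight \<mu> N A t y \<partial>RN (N - 1))
      = (\<Sum>k<N. (\<integral>y. (Amul N A y k)^4 * weight \<mu> N A t y \<partial>RN (N - 1)) / real N)"
    unfolding Pm_def sum_divide_distrib sum_distrib_right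
    using integrable_Amul_pow4_weight by (simp add: mult.commute mult.left_commute)
  also have "\<dots> \<le> (\<Sum>k<N. 512 * exp (2 * pi^2 / m) * ZN \<mu> N A t / real N)"
    using integral_Amul_pow4_weight_le by (intro sum_mono divide_right_mono) auto
  also have "\<dots> = 512 * exp (2 * pi^2 / m) * ZN \<mu> N A t" using N_pos by simp
  finally show ?thesis .
qed

end

lemma weight_integrals_if_N_lt_2:
  assumes "N < 2"
  shows "integrable (RN (N - 1)) (weight \<mu> N A t)"
    and "integrable (RN (N - 1)) (\<lambda>y. Pm 4 N A y / real N * weight \<mu> N A t y)"
    and "(\<integral>y. Pm 4 N A y / real N * weight \<mu> N A t y \<partial>RN (N - 1)) = 0"
proof -
  have "N - 1 = 0" using assms by simp
  then have Amul: "Amul N A y = (\<lambda>_. 0)" for y unfolding Amul_def by simp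
  have "RN (N - 1) = count_space {\<lambda>_. undefined}"
    unfolding \<open>N - 1 = 0\<close> RN_def lessThan_0 PiM_empty ..
  then show "integrable (RN (N - 1)) (weight \<mu> N A t)"
    and "integrable (RN (N - 1)) (\<lambda>y. Pm 4 N A y / real N * weight \<mu> N A t y)"
    and "(\<integral>y. Pm 4 N A y / real N * weight \<mu> N A t y \<partial>RN (N - 1)) = 0"
    by (simp_all add: weight_def Pm_def Qf_def Amul integrable_count_space)
qed

lemma Pm4_weight_ratio_le:
  assumes "0 < m" and "m \<le> \<mu>" and "m \<le> \<mu> + t - 1" and "is_onb_sum_zero N A"
  shows "integrable (RN (N - 1)) (weight \<mu> N A t) \<and>
    integrable (RN (N - 1)) (\<lambda>y. Pm 4 N A y / real N * weight \<mu> N A t y) \<and>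
    (\<integral>y. Pm 4 N A y / real N * weight \<mu> N A t y \<partial>RN (N - 1)) / ZN \<mu> N A t \<le> 512 * exp (2 * pi^2 / m)"
proof (cases "2 \<le> N")
  case True
  then interpret coercive_chain \<mu> t m N A
    using assms by unfold_locales
  have "(\<integral>y. Pm 4 N A y / real N * weight \<mu> N A t y \<partial>RN (N - 1)) / ZN \<mu> N A t
      \<le> 512 * exp (2 * pi^2 / m)"
    by (rule divide_le_of_le_mult[OF integral_Pm4_weight_le ZN_nonneg]) simp
  then show ?thesis using integrable_weight integrable_Pm4_weight by blast
next
  case False
  then have "N < 2" by simp
  then show ?thesis
    unfolding weight_integrals_if_N_lt_2(3)[OF \<open>N < 2\<close>]
    using weight_integrals_if_N_lt_2(1,2)[OF \<open>N < 2\<close>] by simp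
qed

theorem lemma5p4:
  fixes \<mu> t0 :: real
  assumes "\<mu> > 1" and "t0 > - (\<mu> - 1)"
  shows "\<exists>C>0. \<forall>t\<ge>t0. \<forall>N::nat. \<forall>A. is_onb_sum_zero N A \<longrightarrow>
           integrable (RN (N - 1)) (weight \<mu> N A t) \<and>
           integrable (RN (N - 1)) (\<lambda>y. Pm 4 N A y / real N * weight \<mu> N A t y) \<and>
           (\<integral>y. Pm 4 N A y / real N * weight \<mu> N A t y \<partial>RN (N - 1)) / ZN \<mu> N A t \<le> C"
proof -
  define m where "m = min \<mu> (\<mu> - 1 + t0)"
  show ?thesis
    by (rule exI[of _ "512 * exp (2 * pi^2 / m)"], rule conjI, simp, intro allI impI,
        rule Pm4_weight_ratio_le) (use assms in \<open>simp_all add: m_def\<close>)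
qed

end
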